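(* Let $\mathcal{V}$ be a (left) skew-monoidal category, let $(\mathcal{A},\underline{\mathcal{A}}(-,-),M,j)$ be a skew $\mathcal{V}$-category, and let $(Q,S,\psi)$ be a locally weak $\mathcal{V}$-comonad on it. Then the following data define a skew-enrichment of the category $\mathcal{A}$ over the skew-monoidal category $\mathcal{V}_Q$ (the skew-monoidal structure on $\mathcal{V}$ induced by $Q$): (i) hom functor $(A,B)\mapsto\underline{\mathcal{A}}(SA,B)$; (ii) composition given by the composite $$\underline{\mathcal{A}}(SB,C)\otimes Q\underline{\mathcal{A}}(SA,B)\xrightarrow{1\otimes\psi}\underline{\mathcal{A}}(SB,C)\otimes\underline{\mathcal{A}}(S^2A,SB)\xrightarrow{M}\underline{\mathcal{A}}(S^2A,C)\xrightarrow{\underline{\mathcal{A}}(\delta_A,1)}\underline{\mathcal{A}}(SA,C);$$ (iii) unit given by the composite $I\xrightarrow{j}\underline{\mathcal{A}}(A,A)\xrightarrow{\underline{\mathcal{A}}(\varepsilon_A,1)}\underline{\mathcal{A}}(SA,A)$.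
   Context: A (left) skew-monoidal category $(\mathcal{V},\otimes,I,a,l,r)$ is a category with a functor $\otimes$, an object $I$, and natural transformations (not necessarily invertible) $a\colon (X\otimes Y)\otimes Z\to X\otimes(Y\otimes Z)$, $l\colon I\otimes X\to X$, $r\colon X\to X\otimes I$, satisfying: $(1\otimes a)\circ a\circ(a\otimes 1)=a\circ a$; $l_{X\otimes Y}\circ a_{I,X,Y}=l_X\otimes 1_Y$; $(1_X\otimes l_Y)\circ a_{X,I,Y}\circ(r_X\otimes 1_Y)=1$; $a_{X,Y,I}\circ r_{X\otimes Y}=1_X\otimes r_Y$; $l_I\circ r_I=1_I$. A skew $\mathcal{V}$-category (equivalently, a skew-enrichment of the category $\mathcal{A}$ over $\mathcal{V}$) consists of a category $\mathcal{A}$, a functor $\underline{\mathcal{A}}(-,-)\colon\mathcal{A}^{\mathrm{op}}\times\mathcal{A}\to\mathcal{V}$, and natural transformations $M\colon\underline{\mathcal{A}}(B,C)\otimes\underline{\mathcal{A}}(A,B)\to\underline{\mathcal{A}}(A,C)$, $j\colon I\to\underline{\mathcal{A}}(A,A)$ (natural with respect to morphisms of $\mathcal{A}$) with $M\circ(1\otimes M)\circ a=M\circ(M\otimes 1)$, $M\circ(j\otimes 1)=l$, $M\circ(1\otimes j)\circ r=1$. A monoidal comonad $(Q,\varphi,\varphi_0,\delta,\varepsilon)$ on $\mathcal{V}$ is a comonad $(Q,\delta\colon Q\to Q^2,\varepsilon\colon Q\to 1)$ whose functor is monoidal via natural maps $\varphi\colon QX\otimes QY\to Q(X\otimes Y)$,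 $\varphi_0\colon I\to QI$, and whose $\delta,\varepsilon$ are monoidal natural transformations. The induced skew-monoidal structure $\mathcal{V}_Q$ on $\mathcal{V}$ has tensor $X\otimes QY$, unit $I$, associativity $(X\otimes QY)\otimes QZ\xrightarrow{a}X\otimes(QY\otimes QZ)\xrightarrow{1\otimes(1\otimes\delta)}X\otimes(QY\otimes Q^2Z)\xrightarrow{1\otimes\varphi}X\otimes Q(Y\otimes QZ)$, left unit $I\otimes QX\xrightarrow{l}QX\xrightarrow{\varepsilon}X$, and right unit $X\xrightarrow{r}X\otimes I\xrightarrow{1\otimes\varphi_0}X\otimes QI$. A locally weak $\mathcal{V}$-comonad $(Q,S,\psi)$ on a skew $\mathcal{V}$-category $\underline{\mathcal{A}}$ consists of a monoidal comonad $(Q,\varphi,\varphi_0,\delta,\varepsilon)$ on $\mathcal{V}$, a comonad $(S,\delta,\varepsilon)$ on the category $\mathcal{A}$, and a natural transformation $\psi\colon Q\underline{\mathcal{A}}(A,B)\to\underline{\mathcal{A}}(SA,SB)$, such that: (1) $\psi\circ QM\circ\varphi=M\circ(\psi\otimes\psi)\colon Q\underline{\mathcal{A}}(B,C)\otimes Q\underline{\mathcal{A}}(A,B)\to\underline{\mathcal{A}}(SA,SC)$; (2) $\underline{\mathcal{A}}(\delta_A,1)\circ\psi\circ Q\psi\circ\delta=\underline{\mathcal{A}}(1,\delta_B)\circ\psi\colon Q\underline{\mathcal{A}}(A,B)\to\underline{\mathcal{A}}(SA,S^2B)$; (3) $\psi\circ Qj\circ\varphi_0=j\colon I\to\underline{\mathcal{A}}(SA,SA)$;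 (4) $\underline{\mathcal{A}}(1,\varepsilon_B)\circ\psi=\underline{\mathcal{A}}(\varepsilon_A,1)\circ\varepsilon\colon Q\underline{\mathcal{A}}(A,B)\to\underline{\mathcal{A}}(SA,B)$. *)

theory Defs
  imports Main
begin

record ('o,'m) cat =
  Obj :: "'o set"
  Arr :: "'m set"
  Dom :: "'m \<Rightarrow> 'o"
  Cod :: "'m \<Rightarrow> 'o"
  Idt :: "'o \<Rightarrow> 'm"
  Cmp :: "'m \<Rightarrow> 'm \<Rightarrow> 'm"   (* Cmp C g f = g \<circ> f *)

definition hom_in :: "('o,'m) cat \<Rightarrow> 'm \<Rightarrow> 'o \<Rightarrow> 'o \<Rightarrow> bool" where
  "hom_in C f X Y \<longleftrightarrow> f \<in> Arr C \<and> Dom C f = X \<and> Cod C f = Y"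

definition category :: "('o,'m) cat \<Rightarrow> bool" where
  "category C \<longleftrightarrow>
     (\<forall>f\<in>Arr C. Dom C f \<in> Obj C \<and> Cod C f \<in> Obj C) \<and>
     (\<forall>X\<in>Obj C. hom_in C (Idt C X) X X) \<and>
     (\<forall>f\<in>Arr C. \<forall>g\<in>Arr C. Cod C f = Dom C g \<longrightarrow> hom_in C (Cmp C g f) (Dom C f) (Cod C g)) \<and>
     (\<forall>f\<in>Arr C. Cmp C (Idt C (Cod C f)) f = f \<and> Cmp C f (Idt C (Dom C f)) = f) \<and>
     (\<forall>f\<in>Arr C. \<forall>g\<in>Arr C. \<forall>h\<in>Arr C. Cod C f = Dom C g \<longrightarrow> Cod C g = Dom C h \<longrightarrow>
        Cmp C h (Cmp C g f) = Cmp C (Cmp C h g) f)"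

definition opcat :: "('o,'m) cat \<Rightarrow> ('o,'m) cat" where
  "opcat C = \<lparr>Obj = Obj C, Arr = Arr C, Dom = Cod C, Cod = Dom C, Idt = Idt C,
              Cmp = (\<lambda>g f. Cmp C f g)\<rparr>"

definition prodcat :: "('o1,'m1) cat \<Rightarrow> ('o2,'m2) cat \<Rightarrow> ('o1 \<times> 'o2, 'm1 \<times> 'm2) cat" where
  "prodcat C D = \<lparr>Obj = Obj C \<times> Obj D, Arr = Arr C \<times> Arr D,
     Dom = (\<lambda>(f,g). (Dom C f, Dom D g)), Cod = (\<lambda>(f,g). (Cod C f, Cod D g)),
     Idt = (\<lambda>(X,Y). (Idt C X, Idt D Y)),
     Cmp = (\<lambda>(g,g') (f,f'). (Cmp C g f, Cmp D g' f'))\<rparr>"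

definition "functor" :: "('o1,'m1) cat \<Rightarrow> ('o2,'m2) cat \<Rightarrow> ('o1 \<Rightarrow> 'o2) \<Rightarrow> ('m1 \<Rightarrow> 'm2) \<Rightarrow> bool" where
  "functor C D Fo Fm \<longleftrightarrow>
     (\<forall>X\<in>Obj C. Fo X \<in> Obj D) \<and>
     (\<forall>f\<in>Arr C. hom_in D (Fm f) (Fo (Dom C f)) (Fo (Cod C f))) \<and>
     (\<forall>X\<in>Obj C. Fm (Idt C X) = Idt D (Fo X)) \<and>
     (\<forall>f\<in>Arr C. \<forall>g\<in>Arr C. Cod C f = Dom C g \<longrightarrow> Fm (Cmp C g f) = Cmp D (Fm g) (Fm f))"

definition nat_trans :: "('o1,'m1) cat \<Rightarrow> ('o2,'m2) cat \<Rightarrow> ('o1 \<Rightarrow> 'o2) \<Rightarrow> ('m1 \<Rightarrow> 'm2)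
    \<Rightarrow> ('o1 \<Rightarrow> 'o2) \<Rightarrow> ('m1 \<Rightarrow> 'm2) \<Rightarrow> ('o1 \<Rightarrow> 'm2) \<Rightarrow> bool" where
  "nat_trans C D Fo Fm Go Gm \<eta> \<longleftrightarrow>
     (\<forall>X\<in>Obj C. hom_in D (\<eta> X) (Fo X) (Go X)) \<and>
     (\<forall>f\<in>Arr C. Cmp D (\<eta> (Cod C f)) (Fm f) = Cmp D (Gm f) (\<eta> (Dom C f)))"

record ('v,'f) skew =
  ten  :: "'v \<Rightarrow> 'v \<Rightarrow> 'v"
  tenm :: "'f \<Rightarrow> 'f \<Rightarrow> 'f"
  unt  :: "'v"
  asc  :: "'v \<Rightarrow> 'v \<Rightarrow> 'v \<Rightarrow> 'f"   (* (X\<otimes>Y)\<otimes>Z \<rightarrow> X\<otimes>(Y\<otimes>Z) *)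
  lu   :: "'v \<Rightarrow> 'f"               (* I\<otimes>X \<rightarrow> X *)
  ru   :: "'v \<Rightarrow> 'f"               (* X \<rightarrow> X\<otimes>I *)

definition skew_monoidal :: "('v,'f) cat \<Rightarrow> ('v,'f) skew \<Rightarrow> bool" where
  "skew_monoidal V T \<longleftrightarrow>
     category V \<and>
     functor (prodcat V V) V (case_prod (ten T)) (case_prod (tenm T)) \<and>
     unt T \<in> Obj V \<and>
     (\<forall>X\<in>Obj V. \<forall>Y\<in>Obj V. \<forall>Z\<in>Obj V.
        hom_in V (asc T X Y Z) (ten T (ten T X Y) Z) (ten T X (ten T Y Z))) \<and>
     (\<forall>f\<in>Arr V. \<forall>g\<in>Arr V. \<forall>h\<in>Arr V.
        Cmp V (asc T (Cod V f) (Cod V g) (Cod V h)) (tenm T (tenm T f g) h)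
        = Cmp V (tenm T f (tenm T g h)) (asc T (Dom V f) (Dom V g) (Dom V h))) \<and>
     (\<forall>X\<in>Obj V. hom_in V (lu T X) (ten T (unt T) X) X) \<and>
     (\<forall>f\<in>Arr V. Cmp V (lu T (Cod V f)) (tenm T (Idt V (unt T)) f) = Cmp V f (lu T (Dom V f))) \<and>
     (\<forall>X\<in>Obj V. hom_in V (ru T X) X (ten T X (unt T))) \<and>
     (\<forall>f\<in>Arr V. Cmp V (ru T (Cod V f)) f = Cmp V (tenm T f (Idt V (unt T))) (ru T (Dom V f))) \<and>
     (\<forall>W\<in>Obj V. \<forall>X\<in>Obj V. \<forall>Y\<in>Obj V. \<forall>Z\<in>Obj V.
        Cmp V (tenm T (Idt V W) (asc T X Y Z))
          (Cmp V (asc T W (ten T X Y) Z) (tenm T (asc T W X Y) (Idt V Z)))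
        = Cmp V (asc T W X (ten T Y Z)) (asc T (ten T W X) Y Z)) \<and>
     (\<forall>X\<in>Obj V. \<forall>Y\<in>Obj V.
        Cmp V (lu T (ten T X Y)) (asc T (unt T) X Y) = tenm T (lu T X) (Idt V Y)) \<and>
     (\<forall>X\<in>Obj V. \<forall>Y\<in>Obj V.
        Cmp V (tenm T (Idt V X) (lu T Y)) (Cmp V (asc T X (unt T) Y) (tenm T (ru T X) (Idt V Y)))
        = Idt V (ten T X Y)) \<and>
     (\<forall>X\<in>Obj V. \<forall>Y\<in>Obj V.
        Cmp V (asc T X Y (unt T)) (ru T (ten T X Y)) = tenm T (Idt V X) (ru T Y)) \<and>
     Cmp V (lu T (unt T)) (ru T (unt T)) = Idt V (unt T)"

text \<open>Naturality of M and j with respect to morphisms of A is the usual one: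
  M natural in X and Z, extranatural in Y; j extranatural.\<close>

definition skew_enriched :: "('v,'f) cat \<Rightarrow> ('v,'f) skew \<Rightarrow> ('a,'g) cat
    \<Rightarrow> ('a \<Rightarrow> 'a \<Rightarrow> 'v) \<Rightarrow> ('g \<Rightarrow> 'g \<Rightarrow> 'f)
    \<Rightarrow> ('a \<Rightarrow> 'a \<Rightarrow> 'a \<Rightarrow> 'f) \<Rightarrow> ('a \<Rightarrow> 'f) \<Rightarrow> bool" where
  "skew_enriched V T A hom homm M j \<longleftrightarrow>
     category A \<and>
     functor (prodcat (opcat A) A) V (case_prod hom) (case_prod homm) \<and>
     (\<forall>X\<in>Obj A. \<forall>Y\<in>Obj A. \<forall>Z\<in>Obj A.
        hom_in V (M X Y Z) (ten T (hom Y Z) (hom X Y)) (hom X Z)) \<and>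
     (\<forall>X\<in>Obj A. hom_in V (j X) (unt T) (hom X X)) \<and>
     (\<forall>f\<in>Arr A. \<forall>Y\<in>Obj A. \<forall>Z\<in>Obj A.
        Cmp V (homm f (Idt A Z)) (M (Cod A f) Y Z)
        = Cmp V (M (Dom A f) Y Z) (tenm T (Idt V (hom Y Z)) (homm f (Idt A Y)))) \<and>
     (\<forall>g\<in>Arr A. \<forall>X\<in>Obj A. \<forall>Y\<in>Obj A.
        Cmp V (homm (Idt A X) g) (M X Y (Dom A g))
        = Cmp V (M X Y (Cod A g)) (tenm T (homm (Idt A Y) g) (Idt V (hom X Y)))) \<and>
     (\<forall>h\<in>Arr A. \<forall>X\<in>Obj A. \<forall>Z\<in>Obj A.
        Cmp V (M X (Cod A h) Z) (tenm T (Idt V (hom (Cod A h) Z)) (homm (Idt A X) h))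
        = Cmp V (M X (Dom A h) Z) (tenm T (homm h (Idt A Z)) (Idt V (hom X (Dom A h))))) \<and>
     (\<forall>f\<in>Arr A. Cmp V (homm (Idt A (Dom A f)) f) (j (Dom A f))
                = Cmp V (homm f (Idt A (Cod A f))) (j (Cod A f))) \<and>
     (\<forall>W\<in>Obj A. \<forall>X\<in>Obj A. \<forall>Y\<in>Obj A. \<forall>Z\<in>Obj A.
        Cmp V (M W Y Z) (Cmp V (tenm T (Idt V (hom Y Z)) (M W X Y)) (asc T (hom Y Z) (hom X Y) (hom W X)))
        = Cmp V (M W X Z) (tenm T (M X Y Z) (Idt V (hom W X)))) \<and>
     (\<forall>X\<in>Obj A. \<forall>Y\<in>Obj A.
        Cmp V (M X Y Y) (tenm T (j Y) (Idt V (hom X Y))) = lu T (hom X Y)) \<and>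
     (\<forall>X\<in>Obj A. \<forall>Y\<in>Obj A.
        Cmp V (M X X Y) (Cmp V (tenm T (Idt V (hom X Y)) (j X)) (ru T (hom X Y))) = Idt V (hom X Y))"

definition comonad :: "('o,'m) cat \<Rightarrow> ('o \<Rightarrow> 'o) \<Rightarrow> ('m \<Rightarrow> 'm) \<Rightarrow> ('o \<Rightarrow> 'm) \<Rightarrow> ('o \<Rightarrow> 'm) \<Rightarrow> bool" where
  "comonad C So Sm dl ep \<longleftrightarrow>
     functor C C So Sm \<and>
     nat_trans C C So Sm (So \<circ> So) (Sm \<circ> Sm) dl \<and>
     nat_trans C C So Sm id id ep \<and>
     (\<forall>X\<in>Obj C. Cmp C (Sm (dl X)) (dl X) = Cmp C (dl (So X)) (dl X)) \<and>
     (\<forall>X\<in>Obj C. Cmp C (ep (So X)) (dl X) = Idt C (So X)) \<and>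
     (\<forall>X\<in>Obj C. Cmp C (Sm (ep X)) (dl X) = Idt C (So X))"

definition monoidal_comonad :: "('v,'f) cat \<Rightarrow> ('v,'f) skew \<Rightarrow> ('v \<Rightarrow> 'v) \<Rightarrow> ('f \<Rightarrow> 'f)
    \<Rightarrow> ('v \<Rightarrow> 'v \<Rightarrow> 'f) \<Rightarrow> 'f \<Rightarrow> ('v \<Rightarrow> 'f) \<Rightarrow> ('v \<Rightarrow> 'f) \<Rightarrow> bool" where
  "monoidal_comonad V T Qo Qm phi phi0 dl ep \<longleftrightarrow>
     comonad V Qo Qm dl ep \<and>
     (\<forall>X\<in>Obj V. \<forall>Y\<in>Obj V. hom_in V (phi X Y) (ten T (Qo X) (Qo Y)) (Qo (ten T X Y))) \<and>
     (\<forall>f\<in>Arr V. \<forall>g\<in>Arr V.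
        Cmp V (phi (Cod V f) (Cod V g)) (tenm T (Qm f) (Qm g))
        = Cmp V (Qm (tenm T f g)) (phi (Dom V f) (Dom V g))) \<and>
     hom_in V phi0 (unt T) (Qo (unt T)) \<and>
     (\<forall>X\<in>Obj V. \<forall>Y\<in>Obj V. \<forall>Z\<in>Obj V.
        Cmp V (Qm (asc T X Y Z)) (Cmp V (phi (ten T X Y) Z) (tenm T (phi X Y) (Idt V (Qo Z))))
        = Cmp V (phi X (ten T Y Z)) (Cmp V (tenm T (Idt V (Qo X)) (phi Y Z)) (asc T (Qo X) (Qo Y) (Qo Z)))) \<and>
     (\<forall>X\<in>Obj V.
        Cmp V (Qm (lu T X)) (Cmp V (phi (unt T) X) (tenm T phi0 (Idt V (Qo X)))) = lu T (Qo X)) \<and>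
     (\<forall>X\<in>Obj V.
        Cmp V (phi X (unt T)) (Cmp V (tenm T (Idt V (Qo X)) phi0) (ru T (Qo X))) = Qm (ru T X)) \<and>
     (\<forall>X\<in>Obj V. \<forall>Y\<in>Obj V.
        Cmp V (dl (ten T X Y)) (phi X Y)
        = Cmp V (Qm (phi X Y)) (Cmp V (phi (Qo X) (Qo Y)) (tenm T (dl X) (dl Y)))) \<and>
     Cmp V (dl (unt T)) phi0 = Cmp V (Qm phi0) phi0 \<and>
     (\<forall>X\<in>Obj V. \<forall>Y\<in>Obj V.
        Cmp V (ep (ten T X Y)) (phi X Y) = tenm T (ep X) (ep Y)) \<and>
     Cmp V (ep (unt T)) phi0 = Idt V (unt T)"

definition VQ :: "('v,'f) cat \<Rightarrow> ('v,'f) skew \<Rightarrow> ('v \<Rightarrow> 'v) \<Rightarrow> ('f \<Rightarrow> 'f)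
    \<Rightarrow> ('v \<Rightarrow> 'v \<Rightarrow> 'f) \<Rightarrow> 'f \<Rightarrow> ('v \<Rightarrow> 'f) \<Rightarrow> ('v \<Rightarrow> 'f) \<Rightarrow> ('v,'f) skew" where
  "VQ V T Qo Qm phi phi0 dl ep =
    \<lparr>ten = (\<lambda>X Y. ten T X (Qo Y)),
     tenm = (\<lambda>f g. tenm T f (Qm g)),
     unt = unt T,
     asc = (\<lambda>X Y Z. Cmp V (tenm T (Idt V X) (phi Y (Qo Z)))
                     (Cmp V (tenm T (Idt V X) (tenm T (Idt V (Qo Y)) (dl Z))) (asc T X (Qo Y) (Qo Z)))),
     lu = (\<lambda>X. Cmp V (ep X) (lu T (Qo X))),
     ru = (\<lambda>X. Cmp V (tenm T (Idt V X) phi0) (ru T X))\<rparr>"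

definition locally_weak_comonad :: "('v,'f) cat \<Rightarrow> ('v,'f) skew \<Rightarrow> ('a,'g) cat
    \<Rightarrow> ('a \<Rightarrow> 'a \<Rightarrow> 'v) \<Rightarrow> ('g \<Rightarrow> 'g \<Rightarrow> 'f) \<Rightarrow> ('a \<Rightarrow> 'a \<Rightarrow> 'a \<Rightarrow> 'f) \<Rightarrow> ('a \<Rightarrow> 'f)
    \<Rightarrow> ('v \<Rightarrow> 'v) \<Rightarrow> ('f \<Rightarrow> 'f) \<Rightarrow> ('v \<Rightarrow> 'v \<Rightarrow> 'f) \<Rightarrow> 'f \<Rightarrow> ('v \<Rightarrow> 'f) \<Rightarrow> ('v \<Rightarrow> 'f)
    \<Rightarrow> ('a \<Rightarrow> 'a) \<Rightarrow> ('g \<Rightarrow> 'g) \<Rightarrow> ('a \<Rightarrow> 'g) \<Rightarrow> ('a \<Rightarrow> 'g)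
    \<Rightarrow> ('a \<Rightarrow> 'a \<Rightarrow> 'f) \<Rightarrow> bool" where
  "locally_weak_comonad V T A hom homm M j Qo Qm phi phi0 dQ eQ So Sm dS eS psi \<longleftrightarrow>
     monoidal_comonad V T Qo Qm phi phi0 dQ eQ \<and>
     comonad A So Sm dS eS \<and>
     (\<forall>X\<in>Obj A. \<forall>Y\<in>Obj A. hom_in V (psi X Y) (Qo (hom X Y)) (hom (So X) (So Y))) \<and>
     (\<forall>f\<in>Arr A. \<forall>g\<in>Arr A.
        Cmp V (psi (Dom A f) (Cod A g)) (Qm (homm f g))
        = Cmp V (homm (Sm f) (Sm g)) (psi (Cod A f) (Dom A g))) \<and>
     (\<forall>X\<in>Obj A. \<forall>Y\<in>Obj A. \<forall>Z\<in>Obj A.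
        Cmp V (psi X Z) (Cmp V (Qm (M X Y Z)) (phi (hom Y Z) (hom X Y)))
        = Cmp V (M (So X) (So Y) (So Z)) (tenm T (psi Y Z) (psi X Y))) \<and>
     (\<forall>X\<in>Obj A. \<forall>Y\<in>Obj A.
        Cmp V (homm (dS X) (Idt A (So (So Y))))
          (Cmp V (psi (So X) (So Y)) (Cmp V (Qm (psi X Y)) (dQ (hom X Y))))
        = Cmp V (homm (Idt A (So X)) (dS Y)) (psi X Y)) \<and>
     (\<forall>X\<in>Obj A. Cmp V (psi X X) (Cmp V (Qm (j X)) phi0) = j (So X)) \<and>
     (\<forall>X\<in>Obj A. \<forall>Y\<in>Obj A.
        Cmp V (homm (Idt A (So X)) (eS Y)) (psi X Y)
        = Cmp V (homm (eS X) (Idt A Y)) (eQ (hom X Y)))"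

end

theory Submission
  imports Defs
begin

text \<open>\<open>A(SA, B)\<close> is the object of co-Kleisli arrows \<open>SA \<rightarrow> B\<close>, and \<open>\<psi>\<close>
  lets \<open>Q\<close> act on them; this is why composition can take its second argument from
  \<open>Q A(SA, B)\<close>, i.e. why the enrichment lives over the tensor \<open>X \<otimes> QY\<close> of \<open>V\<^sub>Q\<close>. Each axiom
  of the new enrichment follows by moving the \<open>\<delta>\<close>'s and \<open>\<epsilon>\<close>'s of \<open>S\<close> past \<open>M\<close> and \<open>j\<close> with
  their (extra)naturality and then using the matching old axioms: associativity of \<open>M\<close>,
  compatibility of \<open>\<psi>\<close> with \<open>M\<close> and with \<open>\<delta>\<close>, and coassociativity of \<open>S\<close> for associativity;
  the \<open>j\<close>- and \<open>\<epsilon>\<close>-axioms of \<open>\<psi>\<close> together with the counit laws of \<open>S\<close> for the unit laws.\<close>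

context
  fixes C :: "('o,'m) cat"
  assumes cat: "category C"
begin

lemma cat_dom_obj [simp]: "f \<in> Arr C \<Longrightarrow> Dom C f \<in> Obj C"
  using cat unfolding category_def by blast

lemma cat_cod_obj [simp]: "f \<in> Arr C \<Longrightarrow> Cod C f \<in> Obj C"
  using cat unfolding category_def by blast

lemma cat_idt [simp]:
  "X \<in> Obj C \<Longrightarrow> Idt C X \<in> Arr C"
  "X \<in> Obj C \<Longrightarrow> Dom C (Idt C X) = X"
  "X \<in> Obj C \<Longrightarrow> Cod C (Idt C X) = X"
  using cat unfolding category_def hom_in_def by blast+

lemma cat_cmp [simp]:
  assumes "f \<in> Arr C" "g \<in> Arr C" "Cod C f = Dom C g"
  shows "Cmp C g f \<in> Arr C" "Dom C (Cmp C g f) = Dom C f" "Cod C (Cmp C g f) = Cod C g"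
  using cat assms unfolding category_def hom_in_def by blast+

lemma cat_idl [simp]: "f \<in> Arr C \<Longrightarrow> Cod C f = Y \<Longrightarrow> Cmp C (Idt C Y) f = f"
  using cat unfolding category_def by blast

lemma cat_idr [simp]: "f \<in> Arr C \<Longrightarrow> Dom C f = X \<Longrightarrow> Cmp C f (Idt C X) = f"
  using cat unfolding category_def by blast

lemma cat_assoc [simp]:
  "\<lbrakk>f \<in> Arr C; g \<in> Arr C; h \<in> Arr C; Cod C f = Dom C g; Cod C g = Dom C h\<rbrakk>
    \<Longrightarrow> Cmp C (Cmp C h g) f = Cmp C h (Cmp C g f)"
  using cat unfolding category_def by metis

text \<open>The simplifier normalises composites to the right with \<open>cat_assoc\<close>, so an equation
  between composites only rewrites inside a longer composite after being extended on the
  right by the remaining arrow \<open>r\<close>.\<close>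

lemma cat_cmp_extend:
  "\<lbrakk>Cmp C a b = Cmp C c d; a \<in> Arr C; b \<in> Arr C; c \<in> Arr C; d \<in> Arr C; r \<in> Arr C;
    Cod C b = Dom C a; Cod C d = Dom C c; Cod C r = Dom C b; Cod C r = Dom C d\<rbrakk>
    \<Longrightarrow> Cmp C a (Cmp C b r) = Cmp C c (Cmp C d r)"
  by (metis cat_assoc)

lemma cat_cmp_extend_21:
  "\<lbrakk>Cmp C a b = d; a \<in> Arr C; b \<in> Arr C; r \<in> Arr C; Cod C b = Dom C a; Cod C r = Dom C b\<rbrakk>
    \<Longrightarrow> Cmp C a (Cmp C b r) = Cmp C d r"
  by (metis cat_assoc)

lemma cat_cmp_extend_31:
  "\<lbrakk>Cmp C a (Cmp C b c) = d; a \<in> Arr C; b \<in> Arr C; c \<in> Arr C; r \<in> Arr C;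
    Cod C b = Dom C a; Cod C c = Dom C b; Cod C r = Dom C c\<rbrakk>
    \<Longrightarrow> Cmp C a (Cmp C b (Cmp C c r)) = Cmp C d r"
  by (metis cat_assoc cat_cmp)

lemma cat_cmp_extend_32:
  "\<lbrakk>Cmp C a (Cmp C b c) = Cmp C d e; a \<in> Arr C; b \<in> Arr C; c \<in> Arr C; d \<in> Arr C; e \<in> Arr C;
    r \<in> Arr C; Cod C b = Dom C a; Cod C c = Dom C b; Cod C e = Dom C d; Cod C r = Dom C c;
    Cod C r = Dom C e\<rbrakk>
    \<Longrightarrow> Cmp C a (Cmp C b (Cmp C c r)) = Cmp C d (Cmp C e r)"
  by (metis cat_assoc cat_cmp)

end

context
  fixes C :: "('o,'m) cat" and D :: "('p,'n) cat" and Fo Fm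
  assumes F: "functor C D Fo Fm"
begin

lemma functor_obj [simp]: "X \<in> Obj C \<Longrightarrow> Fo X \<in> Obj D"
  using F unfolding functor_def by blast

lemma functor_arr [simp]:
  "f \<in> Arr C \<Longrightarrow> Fm f \<in> Arr D"
  "f \<in> Arr C \<Longrightarrow> Dom D (Fm f) = Fo (Dom C f)"
  "f \<in> Arr C \<Longrightarrow> Cod D (Fm f) = Fo (Cod C f)"
  using F unfolding functor_def hom_in_def by blast+

lemma functor_idt [simp]: "X \<in> Obj C \<Longrightarrow> Fm (Idt C X) = Idt D (Fo X)"
  using F unfolding functor_def by blast

lemma functor_cmp:
  "\<lbrakk>f \<in> Arr C; g \<in> Arr C; Cod C f = Dom C g\<rbrakk> \<Longrightarrow> Fm (Cmp C g f) = Cmp D (Fm g) (Fm f)"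
  using F unfolding functor_def by blast

end

context
  fixes C :: "('o,'m) cat" and So Sm dl ep
  assumes S: "comonad C So Sm dl ep"
begin

lemma comonad_functor: "functor C C So Sm"
  using S unfolding comonad_def by blast

lemma comonad_delta_arr [simp]:
  "X \<in> Obj C \<Longrightarrow> dl X \<in> Arr C"
  "X \<in> Obj C \<Longrightarrow> Dom C (dl X) = So X"
  "X \<in> Obj C \<Longrightarrow> Cod C (dl X) = So (So X)"
  using S unfolding comonad_def nat_trans_def hom_in_def by auto

lemma comonad_counit_arr [simp]:
  "X \<in> Obj C \<Longrightarrow> ep X \<in> Arr C"
  "X \<in> Obj C \<Longrightarrow> Dom C (ep X) = So X"
  "X \<in> Obj C \<Longrightarrow> Cod C (ep X) = X"
  using S unfolding comonad_def nat_trans_def hom_in_def by auto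

lemma comonad_delta_nat:
  "f \<in> Arr C \<Longrightarrow> Cmp C (dl (Cod C f)) (Sm f) = Cmp C (Sm (Sm f)) (dl (Dom C f))"
  using S unfolding comonad_def nat_trans_def by auto

lemma comonad_counit_nat:
  "f \<in> Arr C \<Longrightarrow> Cmp C (ep (Cod C f)) (Sm f) = Cmp C f (ep (Dom C f))"
  using S unfolding comonad_def nat_trans_def by auto

lemma comonad_coassoc: "X \<in> Obj C \<Longrightarrow> Cmp C (Sm (dl X)) (dl X) = Cmp C (dl (So X)) (dl X)"
  using S unfolding comonad_def by blast

lemma comonad_counit_left: "X \<in> Obj C \<Longrightarrow> Cmp C (ep (So X)) (dl X) = Idt C (So X)"
  using S unfolding comonad_def by blast

lemma comonad_counit_right: "X \<in> Obj C \<Longrightarrow> Cmp C (Sm (ep X)) (dl X) = Idt C (So X)"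
  using S unfolding comonad_def by blast

end

locale skew_monoidal_category =
  fixes V :: "('v,'f) cat" and T :: "('v,'f) skew"
  assumes skew_monoidal: "skew_monoidal V T"
begin

abbreviation cmpV (infixr "\<cdot>" 55) where "g \<cdot> f \<equiv> Cmp V g f"
abbreviation tenmT (infixr "\<odot>" 60) where "f \<odot> g \<equiv> tenm T f g"
abbreviation iV where "iV X \<equiv> Idt V X"

lemma category_V: "category V"
  using skew_monoidal unfolding skew_monoidal_def by blast

lemma tensor_functor: "functor (prodcat V V) V (case_prod (ten T)) (case_prod (tenm T))"
  using skew_monoidal unfolding skew_monoidal_def by blast

lemmas V_simps [simp] = cat_dom_obj[OF category_V] cat_cod_obj[OF category_V]
  cat_idt[OF category_V] cat_cmp[OF category_V] cat_idl[OF category_V] cat_idr[OF category_V]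
  cat_assoc[OF category_V]

lemmas V_cmp_extend = cat_cmp_extend[OF category_V]
lemmas V_cmp_extend_21 = cat_cmp_extend_21[OF category_V]
lemmas V_cmp_extend_31 = cat_cmp_extend_31[OF category_V]
lemmas V_cmp_extend_32 = cat_cmp_extend_32[OF category_V]

lemma ten_obj [simp]: "X \<in> Obj V \<Longrightarrow> Y \<in> Obj V \<Longrightarrow> ten T X Y \<in> Obj V"
  using functor_obj[OF tensor_functor, of "(X,Y)"] by (simp add: prodcat_def)

lemma tenm_arr [simp]:
  "f \<in> Arr V \<Longrightarrow> g \<in> Arr V \<Longrightarrow> f \<odot> g \<in> Arr V"
  "f \<in> Arr V \<Longrightarrow> g \<in> Arr V \<Longrightarrow> Dom V (f \<odot> g) = ten T (Dom V f) (Dom V g)"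
  "f \<in> Arr V \<Longrightarrow> g \<in> Arr V \<Longrightarrow> Cod V (f \<odot> g) = ten T (Cod V f) (Cod V g)"
  using functor_arr[OF tensor_functor, of "(f,g)"] by (simp_all add: prodcat_def)

lemma tenm_idt [simp]: "X \<in> Obj V \<Longrightarrow> Y \<in> Obj V \<Longrightarrow> iV X \<odot> iV Y = iV (ten T X Y)"
  using functor_idt[OF tensor_functor, of "(X,Y)"] by (simp add: prodcat_def)

lemma tenm_cmp:
  "\<lbrakk>f \<in> Arr V; g \<in> Arr V; f' \<in> Arr V; g' \<in> Arr V; Cod V f = Dom V g; Cod V f' = Dom V g'\<rbrakk>
    \<Longrightarrow> (g \<cdot> f) \<odot> (g' \<cdot> f') = (g \<odot> g') \<cdot> (f \<odot> f')"
  using functor_cmp[OF tensor_functor, of "(f,f')" "(g,g')"] by (simp add: prodcat_def)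

lemma idt_tenm_cmp:
  "\<lbrakk>X \<in> Obj V; a \<in> Arr V; b \<in> Arr V; Cod V b = Dom V a\<rbrakk>
    \<Longrightarrow> iV X \<odot> (a \<cdot> b) = (iV X \<odot> a) \<cdot> (iV X \<odot> b)"
  using tenm_cmp[of "iV X" "iV X" b a] by simp

lemma tenm_idt_cmp:
  "\<lbrakk>X \<in> Obj V; a \<in> Arr V; b \<in> Arr V; Cod V b = Dom V a\<rbrakk>
    \<Longrightarrow> (a \<cdot> b) \<odot> iV X = (a \<odot> iV X) \<cdot> (b \<odot> iV X)"
  using tenm_cmp[of b a "iV X" "iV X"] by simp

lemma tenm_factor:
  "a \<in> Arr V \<Longrightarrow> b \<in> Arr V \<Longrightarrow> a \<odot> b = (a \<odot> iV (Cod V b)) \<cdot> (iV (Dom V a) \<odot> b)"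
  "a \<in> Arr V \<Longrightarrow> b \<in> Arr V \<Longrightarrow> a \<odot> b = (iV (Cod V a) \<odot> b) \<cdot> (a \<odot> iV (Dom V b))"
  using tenm_cmp[of "iV (Dom V a)" a b "iV (Cod V b)"] tenm_cmp[of a "iV (Cod V a)" "iV (Dom V b)" b]
  by simp_all

lemma tenm_interchange:
  "\<lbrakk>a \<in> Arr V; b \<in> Arr V; Dom V a = A0; Cod V b = B1\<rbrakk>
    \<Longrightarrow> (a \<odot> iV B1) \<cdot> (iV A0 \<odot> b) = (iV (Cod V a) \<odot> b) \<cdot> (a \<odot> iV (Dom V b))"
  using tenm_factor[of a b] by simp

lemma tenm_interchange':
  "\<lbrakk>a \<in> Arr V; b \<in> Arr V; Cod V a = A1; Dom V b = B0\<rbrakk>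
    \<Longrightarrow> (iV A1 \<odot> b) \<cdot> (a \<odot> iV B0) = (a \<odot> iV (Cod V b)) \<cdot> (iV (Dom V a) \<odot> b)"
  using tenm_factor[of a b] by simp

lemma unt_obj [simp]: "unt T \<in> Obj V"
  using skew_monoidal unfolding skew_monoidal_def by blast

lemma asc_arr [simp]:
  "X \<in> Obj V \<Longrightarrow> Y \<in> Obj V \<Longrightarrow> Z \<in> Obj V \<Longrightarrow> asc T X Y Z \<in> Arr V"
  "X \<in> Obj V \<Longrightarrow> Y \<in> Obj V \<Longrightarrow> Z \<in> Obj V \<Longrightarrow> Dom V (asc T X Y Z) = ten T (ten T X Y) Z"
  "X \<in> Obj V \<Longrightarrow> Y \<in> Obj V \<Longrightarrow> Z \<in> Obj V \<Longrightarrow> Cod V (asc T X Y Z) = ten T X (ten T Y Z)"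
  using skew_monoidal unfolding skew_monoidal_def hom_in_def by blast+

lemma lu_arr [simp]:
  "X \<in> Obj V \<Longrightarrow> lu T X \<in> Arr V"
  "X \<in> Obj V \<Longrightarrow> Dom V (lu T X) = ten T (unt T) X"
  "X \<in> Obj V \<Longrightarrow> Cod V (lu T X) = X"
  using skew_monoidal unfolding skew_monoidal_def hom_in_def by blast+

lemma ru_arr [simp]:
  "X \<in> Obj V \<Longrightarrow> ru T X \<in> Arr V"
  "X \<in> Obj V \<Longrightarrow> Dom V (ru T X) = X"
  "X \<in> Obj V \<Longrightarrow> Cod V (ru T X) = ten T X (unt T)"
  using skew_monoidal unfolding skew_monoidal_def hom_in_def by blast+

lemma lu_nat:
  "\<lbrakk>f \<in> Arr V; Dom V f = X; Cod V f = Y\<rbrakk> \<Longrightarrow> lu T Y \<cdot> (iV (unt T) \<odot> f) = f \<cdot> lu T X"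
  using skew_monoidal unfolding skew_monoidal_def by blast

lemma asc_nat:
  "\<lbrakk>f \<in> Arr V; g \<in> Arr V; h \<in> Arr V; Dom V f = X; Dom V g = Y; Dom V h = Z\<rbrakk>
    \<Longrightarrow> asc T (Cod V f) (Cod V g) (Cod V h) \<cdot> ((f \<odot> g) \<odot> h) = (f \<odot> (g \<odot> h)) \<cdot> asc T X Y Z"
  using skew_monoidal unfolding skew_monoidal_def by blast

end

locale skew_enriched_category = skew_monoidal_category V T
  for V :: "('v,'f) cat" and T :: "('v,'f) skew" +
  fixes A :: "('a,'g) cat" and hom homm M j
  assumes skew_enriched: "skew_enriched V T A hom homm M j"
begin

abbreviation iA where "iA X \<equiv> Idt A X"

lemma category_A: "category A"
  using skew_enriched unfolding skew_enriched_def by blast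

lemma hom_functor: "functor (prodcat (opcat A) A) V (case_prod hom) (case_prod homm)"
  using skew_enriched unfolding skew_enriched_def by blast

lemmas A_simps [simp] = cat_dom_obj[OF category_A] cat_cod_obj[OF category_A]
  cat_idt[OF category_A] cat_cmp[OF category_A] cat_idl[OF category_A] cat_idr[OF category_A]
  cat_assoc[OF category_A]

lemma hom_obj [simp]: "X \<in> Obj A \<Longrightarrow> Y \<in> Obj A \<Longrightarrow> hom X Y \<in> Obj V"
  using functor_obj[OF hom_functor, of "(X,Y)"] by (simp add: prodcat_def opcat_def)

lemma homm_arr [simp]:
  "f \<in> Arr A \<Longrightarrow> g \<in> Arr A \<Longrightarrow> homm f g \<in> Arr V"
  "f \<in> Arr A \<Longrightarrow> g \<in> Arr A \<Longrightarrow> Dom V (homm f g) = hom (Cod A f) (Dom A g)"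
  "f \<in> Arr A \<Longrightarrow> g \<in> Arr A \<Longrightarrow> Cod V (homm f g) = hom (Dom A f) (Cod A g)"
  using functor_arr[OF hom_functor, of "(f,g)"] by (simp_all add: prodcat_def opcat_def)

lemma homm_idt [simp]: "X \<in> Obj A \<Longrightarrow> Y \<in> Obj A \<Longrightarrow> homm (iA X) (iA Y) = iV (hom X Y)"
  using functor_idt[OF hom_functor, of "(X,Y)"] by (simp add: prodcat_def opcat_def)

lemma homm_cmp:
  "\<lbrakk>f1 \<in> Arr A; f2 \<in> Arr A; g1 \<in> Arr A; g2 \<in> Arr A; Dom A f1 = Cod A f2; Cod A g1 = Dom A g2\<rbrakk>
    \<Longrightarrow> homm (Cmp A f1 f2) (Cmp A g2 g1) = homm f2 g2 \<cdot> homm f1 g1"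
  using functor_cmp[OF hom_functor, of "(f1,g1)" "(f2,g2)"] by (simp add: prodcat_def opcat_def)

lemma homm_cmp_left:
  "\<lbrakk>a \<in> Arr A; b \<in> Arr A; Cod A b = Dom A a; Z \<in> Obj A\<rbrakk>
    \<Longrightarrow> homm (Cmp A a b) (iA Z) = homm b (iA Z) \<cdot> homm a (iA Z)"
  using homm_cmp[of a b "iA Z" "iA Z"] by simp

lemma homm_factor:
  "f \<in> Arr A \<Longrightarrow> g \<in> Arr A \<Longrightarrow> homm f g = homm f (iA (Cod A g)) \<cdot> homm (iA (Cod A f)) g"
  "f \<in> Arr A \<Longrightarrow> g \<in> Arr A \<Longrightarrow> homm f g = homm (iA (Dom A f)) g \<cdot> homm f (iA (Dom A g))"
  using homm_cmp[of "iA (Cod A f)" f g "iA (Cod A g)"] homm_cmp[of f "iA (Dom A f)" "iA (Dom A g)" g]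
  by simp_all

lemma homm_interchange:
  "\<lbrakk>f \<in> Arr A; g \<in> Arr A; Dom A f = X; Dom A g = Y\<rbrakk>
    \<Longrightarrow> homm (iA X) g \<cdot> homm f (iA Y) = homm f (iA (Cod A g)) \<cdot> homm (iA (Cod A f)) g"
  using homm_factor[of f g] by simp

lemma M_hom_in:
  assumes "X \<in> Obj A" "Y \<in> Obj A" "Z \<in> Obj A"
  shows "hom_in V (M X Y Z) (ten T (hom Y Z) (hom X Y)) (hom X Z)"
proof -
  have "\<forall>X\<in>Obj A. \<forall>Y\<in>Obj A. \<forall>Z\<in>Obj A. hom_in V (M X Y Z) (ten T (hom Y Z) (hom X Y)) (hom X Z)"
    using skew_enriched unfolding skew_enriched_def by (elim conjE) assumption
  then show ?thesis using assms by blast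
qed

lemma M_arr [simp]:
  "X \<in> Obj A \<Longrightarrow> Y \<in> Obj A \<Longrightarrow> Z \<in> Obj A \<Longrightarrow> M X Y Z \<in> Arr V"
  "X \<in> Obj A \<Longrightarrow> Y \<in> Obj A \<Longrightarrow> Z \<in> Obj A \<Longrightarrow> Dom V (M X Y Z) = ten T (hom Y Z) (hom X Y)"
  "X \<in> Obj A \<Longrightarrow> Y \<in> Obj A \<Longrightarrow> Z \<in> Obj A \<Longrightarrow> Cod V (M X Y Z) = hom X Z"
  using M_hom_in unfolding hom_in_def by blast+

lemma j_arr [simp]:
  "X \<in> Obj A \<Longrightarrow> j X \<in> Arr V"
  "X \<in> Obj A \<Longrightarrow> Dom V (j X) = unt T"
  "X \<in> Obj A \<Longrightarrow> Cod V (j X) = hom X X"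
  using skew_enriched unfolding skew_enriched_def hom_in_def by blast+

lemma M_nat_left:
  "\<lbrakk>f \<in> Arr A; Dom A f = X; Cod A f = X'; Y \<in> Obj A; Z \<in> Obj A\<rbrakk>
    \<Longrightarrow> homm f (iA Z) \<cdot> M X' Y Z = M X Y Z \<cdot> (iV (hom Y Z) \<odot> homm f (iA Y))"
  using skew_enriched unfolding skew_enriched_def by blast

lemma M_nat_right:
  "\<lbrakk>g \<in> Arr A; Dom A g = Z; Cod A g = Z'; X \<in> Obj A; Y \<in> Obj A\<rbrakk>
    \<Longrightarrow> homm (iA X) g \<cdot> M X Y Z = M X Y Z' \<cdot> (homm (iA Y) g \<odot> iV (hom X Y))"
  using skew_enriched unfolding skew_enriched_def by blast

lemma M_extranat:
  "\<lbrakk>h \<in> Arr A; Dom A h = Y; Cod A h = Y'; X \<in> Obj A; Z \<in> Obj A\<rbrakk>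
    \<Longrightarrow> M X Y' Z \<cdot> (iV (hom Y' Z) \<odot> homm (iA X) h) = M X Y Z \<cdot> (homm h (iA Z) \<odot> iV (hom X Y))"
  using skew_enriched unfolding skew_enriched_def by blast

lemma j_extranat:
  "\<lbrakk>f \<in> Arr A; Dom A f = X; Cod A f = Y\<rbrakk> \<Longrightarrow> homm (iA X) f \<cdot> j X = homm f (iA Y) \<cdot> j Y"
  using skew_enriched unfolding skew_enriched_def by blast

lemma M_assoc:
  "\<lbrakk>W \<in> Obj A; X \<in> Obj A; Y \<in> Obj A; Z \<in> Obj A\<rbrakk>
    \<Longrightarrow> M W Y Z \<cdot> (iV (hom Y Z) \<odot> M W X Y) \<cdot> asc T (hom Y Z) (hom X Y) (hom W X)
      = M W X Z \<cdot> (M X Y Z \<odot> iV (hom W X))"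
  using skew_enriched unfolding skew_enriched_def by blast

lemma M_left_unit:
  "X \<in> Obj A \<Longrightarrow> Y \<in> Obj A \<Longrightarrow> M X Y Y \<cdot> (j Y \<odot> iV (hom X Y)) = lu T (hom X Y)"
  using skew_enriched unfolding skew_enriched_def by blast

lemma M_right_unit:
  "X \<in> Obj A \<Longrightarrow> Y \<in> Obj A \<Longrightarrow> M X X Y \<cdot> (iV (hom X Y) \<odot> j X) \<cdot> ru T (hom X Y) = iV (hom X Y)"
  using skew_enriched unfolding skew_enriched_def by blast

end

locale locally_weak_V_comonad = skew_enriched_category V T A hom homm M j
  for V :: "('v,'f) cat" and T :: "('v,'f) skew" and A :: "('a,'g) cat" and hom homm M j +
  fixes Qo Qm phi phi0 dQ eQ So Sm dS eS psi
  assumes locally_weak: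
    "locally_weak_comonad V T A hom homm M j Qo Qm phi phi0 dQ eQ So Sm dS eS psi"
begin

lemma monoidal_comonad_Q: "monoidal_comonad V T Qo Qm phi phi0 dQ eQ"
  using locally_weak unfolding locally_weak_comonad_def by blast

lemma comonad_Q: "comonad V Qo Qm dQ eQ"
  using monoidal_comonad_Q unfolding monoidal_comonad_def by blast

lemma comonad_S: "comonad A So Sm dS eS"
  using locally_weak unfolding locally_weak_comonad_def by blast

lemmas S_simps [simp] = functor_obj[OF comonad_functor[OF comonad_S]]
  functor_arr[OF comonad_functor[OF comonad_S]] functor_idt[OF comonad_functor[OF comonad_S]]
  comonad_delta_arr[OF comonad_S] comonad_counit_arr[OF comonad_S]
lemmas Q_simps [simp] = functor_obj[OF comonad_functor[OF comonad_Q]]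
  functor_arr[OF comonad_functor[OF comonad_Q]] functor_idt[OF comonad_functor[OF comonad_Q]]
  comonad_delta_arr[OF comonad_Q] comonad_counit_arr[OF comonad_Q]

lemmas Sm_cmp = functor_cmp[OF comonad_functor[OF comonad_S]]
lemmas Qm_cmp = functor_cmp[OF comonad_functor[OF comonad_Q]]

lemma phi_arr [simp]:
  "X \<in> Obj V \<Longrightarrow> Y \<in> Obj V \<Longrightarrow> phi X Y \<in> Arr V"
  "X \<in> Obj V \<Longrightarrow> Y \<in> Obj V \<Longrightarrow> Dom V (phi X Y) = ten T (Qo X) (Qo Y)"
  "X \<in> Obj V \<Longrightarrow> Y \<in> Obj V \<Longrightarrow> Cod V (phi X Y) = Qo (ten T X Y)"
  using monoidal_comonad_Q unfolding monoidal_comonad_def hom_in_def by blast+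

lemma phi0_arr [simp]: "phi0 \<in> Arr V" "Dom V phi0 = unt T" "Cod V phi0 = Qo (unt T)"
  using monoidal_comonad_Q unfolding monoidal_comonad_def hom_in_def by blast+

lemma phi_nat:
  "\<lbrakk>f \<in> Arr V; g \<in> Arr V; Dom V f = X; Dom V g = Y\<rbrakk>
    \<Longrightarrow> phi (Cod V f) (Cod V g) \<cdot> (Qm f \<odot> Qm g) = Qm (f \<odot> g) \<cdot> phi X Y"
  using monoidal_comonad_Q unfolding monoidal_comonad_def by blast

lemma psi_arr [simp]:
  "X \<in> Obj A \<Longrightarrow> Y \<in> Obj A \<Longrightarrow> psi X Y \<in> Arr V"
  "X \<in> Obj A \<Longrightarrow> Y \<in> Obj A \<Longrightarrow> Dom V (psi X Y) = Qo (hom X Y)"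
  "X \<in> Obj A \<Longrightarrow> Y \<in> Obj A \<Longrightarrow> Cod V (psi X Y) = hom (So X) (So Y)"
  using locally_weak unfolding locally_weak_comonad_def hom_in_def by blast+

lemma psi_nat:
  "\<lbrakk>f \<in> Arr A; g \<in> Arr A; Dom A f = X; Cod A g = Y'; Cod A f = X'; Dom A g = Y\<rbrakk>
    \<Longrightarrow> psi X Y' \<cdot> Qm (homm f g) = homm (Sm f) (Sm g) \<cdot> psi X' Y"
  using locally_weak unfolding locally_weak_comonad_def by blast

lemma psi_M:
  "\<lbrakk>X \<in> Obj A; Y \<in> Obj A; Z \<in> Obj A\<rbrakk>
    \<Longrightarrow> psi X Z \<cdot> Qm (M X Y Z) \<cdot> phi (hom Y Z) (hom X Y) = M (So X) (So Y) (So Z) \<cdot> (psi Y Z \<odot> psi X Y)"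
  using locally_weak unfolding locally_weak_comonad_def by blast

lemma psi_delta:
  "\<lbrakk>X \<in> Obj A; Y \<in> Obj A\<rbrakk>
    \<Longrightarrow> homm (dS X) (iA (So (So Y))) \<cdot> psi (So X) (So Y) \<cdot> Qm (psi X Y) \<cdot> dQ (hom X Y)
      = homm (iA (So X)) (dS Y) \<cdot> psi X Y"
  using locally_weak unfolding locally_weak_comonad_def by blast

lemma psi_j: "X \<in> Obj A \<Longrightarrow> psi X X \<cdot> Qm (j X) \<cdot> phi0 = j (So X)"
  using locally_weak unfolding locally_weak_comonad_def by blast

lemma psi_counit:
  "\<lbrakk>X \<in> Obj A; Y \<in> Obj A\<rbrakk> \<Longrightarrow> homm (iA (So X)) (eS Y) \<cdot> psi X Y = homm (eS X) (iA Y) \<cdot> eQ (hom X Y)"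
  using locally_weak unfolding locally_weak_comonad_def by blast

end

context locally_weak_V_comonad
begin

definition coKl_comp where
  "coKl_comp X Y Z = homm (dS X) (iA Z) \<cdot> M (So (So X)) (So Y) Z \<cdot> (iV (hom (So Y) Z) \<odot> psi (So X) Y)"

definition coKl_unit where
  "coKl_unit X = homm (eS X) (iA X) \<cdot> j X"

lemma coKl_comp_arr [simp]:
  "X \<in> Obj A \<Longrightarrow> Y \<in> Obj A \<Longrightarrow> Z \<in> Obj A \<Longrightarrow> coKl_comp X Y Z \<in> Arr V"
  "X \<in> Obj A \<Longrightarrow> Y \<in> Obj A \<Longrightarrow> Z \<in> Obj A
    \<Longrightarrow> Dom V (coKl_comp X Y Z) = ten T (hom (So Y) Z) (Qo (hom (So X) Y))"
  "X \<in> Obj A \<Longrightarrow> Y \<in> Obj A \<Longrightarrow> Z \<in> Obj A \<Longrightarrow> Cod V (coKl_comp X Y Z) = hom (So X) Z"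
  unfolding coKl_comp_def by simp_all

lemma coKl_unit_arr [simp]:
  "X \<in> Obj A \<Longrightarrow> coKl_unit X \<in> Arr V"
  "X \<in> Obj A \<Longrightarrow> Dom V (coKl_unit X) = unt T"
  "X \<in> Obj A \<Longrightarrow> Cod V (coKl_unit X) = hom (So X) X"
  unfolding coKl_unit_def by simp_all

lemma coKl_hom_functor:
  "functor (prodcat (opcat A) A) V (case_prod (\<lambda>X Y. hom (So X) Y)) (case_prod (\<lambda>f g. homm (Sm f) g))"
  unfolding functor_def prodcat_def opcat_def hom_in_def
  by (auto simp: homm_cmp Sm_cmp)

lemma coKl_comp_nat_left:
  assumes f: "f \<in> Arr A" and Y: "Y \<in> Obj A" and Z: "Z \<in> Obj A"
  shows "homm (Sm f) (iA Z) \<cdot> coKl_comp (Cod A f) Y Z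
    = coKl_comp (Dom A f) Y Z \<cdot> (iV (hom (So Y) Z) \<odot> Qm (homm (Sm f) (iA Y)))"
proof -
  define X where "X = Dom A f"
  define X' where "X' = Cod A f"
  have X: "X \<in> Obj A" "X' \<in> Obj A" "Dom A f = X" "Cod A f = X'"
    using f X_def X'_def by auto
  have delta: "homm (Sm f) (iA Z) \<cdot> homm (dS X') (iA Z) = homm (dS X) (iA Z) \<cdot> homm (Sm (Sm f)) (iA Z)"
    using f X Z
    by (simp add: homm_cmp_left[symmetric] comonad_delta_nat[OF comonad_S f, unfolded X(3,4)])
  have M_nat: "homm (Sm (Sm f)) (iA Z) \<cdot> M (So (So X')) (So Y) Z
      = M (So (So X)) (So Y) Z \<cdot> (iV (hom (So Y) Z) \<odot> homm (Sm (Sm f)) (iA (So Y)))"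
    using M_nat_left[of "Sm (Sm f)" "So (So X)" "So (So X')" "So Y" Z] f X Y Z by simp
  have "psi (So X) Y \<cdot> Qm (homm (Sm f) (iA Y)) = homm (Sm (Sm f)) (iA (So Y)) \<cdot> psi (So X') Y"
    using psi_nat[of "Sm f" "iA Y" "So X" Y "So X'" Y] f X Y by simp
  then have psi_nat': "(iV (hom (So Y) Z) \<odot> homm (Sm (Sm f)) (iA (So Y))) \<cdot> (iV (hom (So Y) Z) \<odot> psi (So X') Y)
      = (iV (hom (So Y) Z) \<odot> psi (So X) Y) \<cdot> (iV (hom (So Y) Z) \<odot> Qm (homm (Sm f) (iA Y)))"
    using f X Y Z by (simp add: idt_tenm_cmp[symmetric])
  show ?thesis
    unfolding coKl_comp_def X_def[symmetric] X'_def[symmetric] using f X Y Z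
    by (simp add: V_cmp_extend[OF delta] V_cmp_extend[OF M_nat] psi_nat')
qed

lemma coKl_comp_nat_right:
  assumes g: "g \<in> Arr A" and X: "X \<in> Obj A" and Y: "Y \<in> Obj A"
  shows "homm (Sm (iA X)) g \<cdot> coKl_comp X Y (Dom A g)
    = coKl_comp X Y (Cod A g) \<cdot> (homm (Sm (iA Y)) g \<odot> Qm (iV (hom (So X) Y)))"
proof -
  define Z where "Z = Dom A g"
  define Z' where "Z' = Cod A g"
  have Z: "Z \<in> Obj A" "Z' \<in> Obj A" "Dom A g = Z" "Cod A g = Z'"
    using g Z_def Z'_def by auto
  have delta: "homm (iA (So X)) g \<cdot> homm (dS X) (iA Z) = homm (dS X) (iA Z') \<cdot> homm (iA (So (So X))) g"
    using g X Z by (simp add: homm_interchange)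
  have M_nat: "homm (iA (So (So X))) g \<cdot> M (So (So X)) (So Y) Z
      = M (So (So X)) (So Y) Z' \<cdot> (homm (iA (So Y)) g \<odot> iV (hom (So (So X)) (So Y)))"
    using M_nat_right[of g Z Z' "So (So X)" "So Y"] g X Y Z by simp
  show ?thesis
    unfolding coKl_comp_def Z_def[symmetric] Z'_def[symmetric] using g X Y Z
    by (simp add: V_cmp_extend[OF delta] V_cmp_extend[OF M_nat] tenm_interchange)
qed

lemma coKl_comp_extranat:
  assumes h: "h \<in> Arr A" and X: "X \<in> Obj A" and Z: "Z \<in> Obj A"
  shows "coKl_comp X (Cod A h) Z \<cdot> (iV (hom (So (Cod A h)) Z) \<odot> Qm (homm (Sm (iA X)) h))
    = coKl_comp X (Dom A h) Z \<cdot> (homm (Sm h) (iA Z) \<odot> Qm (iV (hom (So X) (Dom A h))))"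
proof -
  define Y where "Y = Dom A h"
  define Y' where "Y' = Cod A h"
  have Y: "Y \<in> Obj A" "Y' \<in> Obj A" "Dom A h = Y" "Cod A h = Y'"
    using h Y_def Y'_def by auto
  have "psi (So X) Y' \<cdot> Qm (homm (iA (So X)) h) = homm (iA (So (So X))) (Sm h) \<cdot> psi (So X) Y"
    using psi_nat[of "iA (So X)" h "So X" Y' "So X" Y] h X Y by simp
  then have psi_nat': "(iV (hom (So Y') Z) \<odot> psi (So X) Y') \<cdot> (iV (hom (So Y') Z) \<odot> Qm (homm (iA (So X)) h))
      = (iV (hom (So Y') Z) \<odot> homm (iA (So (So X))) (Sm h)) \<cdot> (iV (hom (So Y') Z) \<odot> psi (So X) Y)"
    using h X Y Z by (simp add: idt_tenm_cmp[symmetric])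
  have M_nat: "M (So (So X)) (So Y') Z \<cdot> (iV (hom (So Y') Z) \<odot> homm (iA (So (So X))) (Sm h))
      = M (So (So X)) (So Y) Z \<cdot> (homm (Sm h) (iA Z) \<odot> iV (hom (So (So X)) (So Y)))"
    using M_extranat[of "Sm h" "So Y" "So Y'" "So (So X)" Z] h X Y Z by simp
  show ?thesis
    unfolding coKl_comp_def Y_def[symmetric] Y'_def[symmetric] using h X Y Z
    by (simp add: psi_nat' V_cmp_extend[OF M_nat] tenm_interchange)
qed

lemma coKl_unit_extranat:
  assumes f: "f \<in> Arr A"
  shows "homm (Sm (iA (Dom A f))) f \<cdot> coKl_unit (Dom A f) = homm (Sm f) (iA (Cod A f)) \<cdot> coKl_unit (Cod A f)"
proof -
  define X where "X = Dom A f"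
  define Y where "Y = Cod A f"
  have X: "X \<in> Obj A" "Y \<in> Obj A" "Dom A f = X" "Cod A f = Y"
    using f X_def Y_def by auto
  have interchange: "homm (iA (So X)) f \<cdot> homm (eS X) (iA X) = homm (eS X) (iA Y) \<cdot> homm (iA X) f"
    using f X by (simp add: homm_interchange)
  have j_nat: "homm (iA X) f \<cdot> j X = homm f (iA Y) \<cdot> j Y"
    using j_extranat f X by blast
  have counit: "homm (eS X) (iA Y) \<cdot> homm f (iA Y) = homm (Sm f) (iA Y) \<cdot> homm (eS Y) (iA Y)"
    using f X
    by (simp add: homm_cmp_left[symmetric] comonad_counit_nat[OF comonad_S f, unfolded X(3,4)])
  show ?thesis
    unfolding coKl_unit_def X_def[symmetric] Y_def[symmetric] using f X
    by (simp add: V_cmp_extend[OF interchange] j_nat V_cmp_extend[OF counit])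
qed

lemma coKl_left_unit:
  assumes X: "X \<in> Obj A" and Y: "Y \<in> Obj A"
  shows "coKl_comp X Y Y \<cdot> (coKl_unit Y \<odot> Qm (iV (hom (So X) Y)))
    = eQ (hom (So X) Y) \<cdot> lu T (Qo (hom (So X) Y))"
proof -
  let ?B = "hom (So X) Y" and ?B' = "hom (So (So X)) Y"
  have "coKl_comp X Y Y \<cdot> (coKl_unit Y \<odot> Qm (iV ?B))
      = homm (dS X) (iA Y) \<cdot> M (So (So X)) (So Y) Y \<cdot> (iV (hom (So Y) Y) \<odot> psi (So X) Y)
        \<cdot> (homm (eS Y) (iA Y) \<odot> iV (Qo ?B)) \<cdot> (j Y \<odot> iV (Qo ?B))"
    unfolding coKl_comp_def coKl_unit_def using X Y by (simp add: tenm_idt_cmp)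
  also have "\<dots> = homm (dS X) (iA Y) \<cdot> M (So (So X)) (So Y) Y
        \<cdot> (homm (eS Y) (iA Y) \<odot> iV (hom (So (So X)) (So Y)))
        \<cdot> (iV (hom Y Y) \<odot> psi (So X) Y) \<cdot> (j Y \<odot> iV (Qo ?B))"
    using X Y by (simp add: V_cmp_extend[OF tenm_interchange'])
  also have "\<dots> = homm (dS X) (iA Y) \<cdot> M (So (So X)) Y Y
        \<cdot> (iV (hom Y Y) \<odot> homm (iA (So (So X))) (eS Y))
        \<cdot> (iV (hom Y Y) \<odot> psi (So X) Y) \<cdot> (j Y \<odot> iV (Qo ?B))"
  proof -
    have M_nat: "M (So (So X)) (So Y) Y \<cdot> (homm (eS Y) (iA Y) \<odot> iV (hom (So (So X)) (So Y)))
        = M (So (So X)) Y Y \<cdot> (iV (hom Y Y) \<odot> homm (iA (So (So X))) (eS Y))"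
      using M_extranat[of "eS Y" "So Y" Y "So (So X)" Y] X Y by simp
    show ?thesis using X Y by (simp add: V_cmp_extend[OF M_nat])
  qed
  also have "\<dots> = homm (dS X) (iA Y) \<cdot> M (So (So X)) Y Y \<cdot> (j Y \<odot> iV ?B')
        \<cdot> (iV (unt T) \<odot> homm (iA (So (So X))) (eS Y)) \<cdot> (iV (unt T) \<odot> psi (So X) Y)"
    using X Y by (simp add: V_cmp_extend[OF tenm_interchange'] tenm_interchange')
  also have "\<dots> = homm (dS X) (iA Y) \<cdot> lu T ?B'
        \<cdot> (iV (unt T) \<odot> homm (iA (So (So X))) (eS Y)) \<cdot> (iV (unt T) \<odot> psi (So X) Y)"
    using X Y by (simp add: V_cmp_extend_21[OF M_left_unit])
  also have "\<dots> = homm (dS X) (iA Y) \<cdot> lu T ?B'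
        \<cdot> (iV (unt T) \<odot> homm (eS (So X)) (iA Y)) \<cdot> (iV (unt T) \<odot> eQ ?B)"
    using X Y by (simp add: idt_tenm_cmp[symmetric] psi_counit)
  also have "\<dots> = homm (dS X) (iA Y) \<cdot> homm (eS (So X)) (iA Y) \<cdot> eQ ?B \<cdot> lu T (Qo ?B)"
    using X Y by (simp add: V_cmp_extend[OF lu_nat] lu_nat)
  also have "\<dots> = eQ ?B \<cdot> lu T (Qo ?B)"
  proof -
    have counit: "homm (dS X) (iA Y) \<cdot> homm (eS (So X)) (iA Y) = iV ?B"
      using X Y by (simp add: homm_cmp_left[symmetric] comonad_counit_left[OF comonad_S])
    show ?thesis using X Y by (simp add: V_cmp_extend_21[OF counit])
  qed
  finally show ?thesis .
qed

lemma coKl_right_unit: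
  assumes X: "X \<in> Obj A" and Y: "Y \<in> Obj A"
  shows "coKl_comp X X Y \<cdot> (iV (hom (So X) Y) \<odot> Qm (coKl_unit X)) \<cdot> (iV (hom (So X) Y) \<odot> phi0)
      \<cdot> ru T (hom (So X) Y)
    = iV (hom (So X) Y)"
proof -
  let ?B = "hom (So X) Y"
  have "coKl_comp X X Y \<cdot> (iV ?B \<odot> Qm (coKl_unit X)) \<cdot> (iV ?B \<odot> phi0) \<cdot> ru T ?B
      = homm (dS X) (iA Y) \<cdot> M (So (So X)) (So X) Y \<cdot> (iV ?B \<odot> psi (So X) X)
        \<cdot> (iV ?B \<odot> Qm (homm (eS X) (iA X))) \<cdot> (iV ?B \<odot> Qm (j X)) \<cdot> (iV ?B \<odot> phi0) \<cdot> ru T ?B"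
    unfolding coKl_comp_def coKl_unit_def using X Y by (simp add: Qm_cmp idt_tenm_cmp)
  also have "\<dots> = homm (dS X) (iA Y) \<cdot> M (So (So X)) (So X) Y \<cdot> (iV ?B \<odot> homm (Sm (eS X)) (iA (So X)))
        \<cdot> (iV ?B \<odot> psi X X) \<cdot> (iV ?B \<odot> Qm (j X)) \<cdot> (iV ?B \<odot> phi0) \<cdot> ru T ?B"
  proof -
    have "psi (So X) X \<cdot> Qm (homm (eS X) (iA X)) = homm (Sm (eS X)) (iA (So X)) \<cdot> psi X X"
      using psi_nat[of "eS X" "iA X" "So X" X X X] X by simp
    then have psi_nat': "(iV ?B \<odot> psi (So X) X) \<cdot> (iV ?B \<odot> Qm (homm (eS X) (iA X)))
        = (iV ?B \<odot> homm (Sm (eS X)) (iA (So X))) \<cdot> (iV ?B \<odot> psi X X)"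
      using X Y by (simp add: idt_tenm_cmp[symmetric])
    show ?thesis using X Y by (simp add: V_cmp_extend[OF psi_nat'])
  qed
  also have "\<dots> = homm (dS X) (iA Y) \<cdot> M (So (So X)) (So X) Y \<cdot> (iV ?B \<odot> homm (Sm (eS X)) (iA (So X)))
        \<cdot> (iV ?B \<odot> j (So X)) \<cdot> ru T ?B"
  proof -
    have unit: "(iV ?B \<odot> psi X X) \<cdot> (iV ?B \<odot> Qm (j X)) \<cdot> (iV ?B \<odot> phi0) = iV ?B \<odot> j (So X)"
      using X Y by (simp add: idt_tenm_cmp[symmetric] psi_j)
    show ?thesis using X Y by (simp add: V_cmp_extend_31[OF unit])
  qed
  also have "\<dots> = homm (dS X) (iA Y) \<cdot> homm (Sm (eS X)) (iA Y) \<cdot> M (So X) (So X) Y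
        \<cdot> (iV ?B \<odot> j (So X)) \<cdot> ru T ?B"
  proof -
    have M_nat: "homm (Sm (eS X)) (iA Y) \<cdot> M (So X) (So X) Y
        = M (So (So X)) (So X) Y \<cdot> (iV ?B \<odot> homm (Sm (eS X)) (iA (So X)))"
      using M_nat_left[of "Sm (eS X)" "So (So X)" "So X" "So X" Y] X Y by simp
    show ?thesis using X Y by (simp add: V_cmp_extend[OF M_nat[symmetric]])
  qed
  also have "\<dots> = homm (dS X) (iA Y) \<cdot> homm (Sm (eS X)) (iA Y)"
    using X Y by (simp add: M_right_unit)
  also have "\<dots> = iV ?B"
    using X Y by (simp add: homm_cmp_left[symmetric] comonad_counit_right[OF comonad_S])
  finally show ?thesis .
qed

lemma psi_coKl_comp:
  assumes W: "W \<in> Obj A" and X: "X \<in> Obj A" and Y: "Y \<in> Obj A"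
  shows "psi (So W) Y \<cdot> Qm (homm (dS W) (iA Y)) \<cdot> Qm (M (So (So W)) (So X) Y)
      \<cdot> Qm (iV (hom (So X) Y) \<odot> psi (So W) X) \<cdot> phi (hom (So X) Y) (Qo (hom (So W) X))
      \<cdot> (iV (Qo (hom (So X) Y)) \<odot> dQ (hom (So W) X))
    = homm (Sm (dS W)) (iA (So Y)) \<cdot> M (So (So (So W))) (So (So X)) (So Y)
      \<cdot> (psi (So X) Y \<odot> (psi (So (So W)) (So X) \<cdot> Qm (psi (So W) X) \<cdot> dQ (hom (So W) X)))"
proof -
  have psi_nat': "psi (So W) Y \<cdot> Qm (homm (dS W) (iA Y)) = homm (Sm (dS W)) (iA (So Y)) \<cdot> psi (So (So W)) Y"
    using psi_nat[of "dS W" "iA Y" "So W" Y "So (So W)" Y] W Y by simp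
  have phi_nat': "Qm (iV (hom (So X) Y) \<odot> psi (So W) X) \<cdot> phi (hom (So X) Y) (Qo (hom (So W) X))
      = phi (hom (So X) Y) (hom (So (So W)) (So X)) \<cdot> (iV (Qo (hom (So X) Y)) \<odot> Qm (psi (So W) X))"
    using phi_nat[of "iV (hom (So X) Y)" "psi (So W) X" "hom (So X) Y" "Qo (hom (So W) X)"] W X Y
    by simp
  have psi_M': "psi (So (So W)) Y \<cdot> Qm (M (So (So W)) (So X) Y) \<cdot> phi (hom (So X) Y) (hom (So (So W)) (So X))
      = M (So (So (So W))) (So (So X)) (So Y) \<cdot> (psi (So X) Y \<odot> psi (So (So W)) (So X))"
    using psi_M[of "So (So W)" "So X" Y] W X Y by simp
  show ?thesis using W X Y
    by (simp add: V_cmp_extend[OF psi_nat'] V_cmp_extend[OF phi_nat'] V_cmp_extend_32[OF psi_M']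
        tenm_cmp[symmetric])
qed

text \<open>Both sides of the associativity law reduce to a composite through the right-hand side of
  the associativity law of \<open>M\<close> at \<open>(S\<^sup>3W, S\<^sup>2X, SY, Z)\<close>: the left side by \<open>psi_coKl_comp\<close>
  and coassociativity of \<open>S\<close>, the right side by the \<open>\<delta>\<close>-axiom of \<open>\<psi>\<close>.\<close>

lemma coKl_assoc_left_reduct:
  assumes W: "W \<in> Obj A" and X: "X \<in> Obj A" and Y: "Y \<in> Obj A" and Z: "Z \<in> Obj A"
  defines "a \<equiv> hom (So Y) Z" and "b \<equiv> hom (So X) Y" and "c \<equiv> hom (So W) X"
  shows "coKl_comp W Y Z \<cdot> (iV a \<odot> Qm (coKl_comp W X Y)) \<cdot> (iV a \<odot> phi b (Qo c))
      \<cdot> (iV a \<odot> (iV (Qo b) \<odot> dQ c)) \<cdot> asc T a (Qo b) (Qo c)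
    = homm (dS W) (iA Z) \<cdot> homm (dS (So W)) (iA Z) \<cdot> M (So (So (So W))) (So (So X)) Z
      \<cdot> (M (So (So X)) (So Y) Z \<odot> iV (hom (So (So (So W))) (So (So X))))
      \<cdot> ((iV a \<odot> psi (So X) Y) \<odot> (psi (So (So W)) (So X) \<cdot> Qm (psi (So W) X) \<cdot> dQ c))"
proof -
  let ?R = "psi (So (So W)) (So X) \<cdot> Qm (psi (So W) X) \<cdot> dQ c"
  have "coKl_comp W Y Z \<cdot> (iV a \<odot> Qm (coKl_comp W X Y)) \<cdot> (iV a \<odot> phi b (Qo c))
      \<cdot> (iV a \<odot> (iV (Qo b) \<odot> dQ c)) \<cdot> asc T a (Qo b) (Qo c)
    = homm (dS W) (iA Z) \<cdot> M (So (So W)) (So Y) Z \<cdot> (iV a \<odot> homm (Sm (dS W)) (iA (So Y)))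
      \<cdot> (iV a \<odot> M (So (So (So W))) (So (So X)) (So Y)) \<cdot> (iV a \<odot> (psi (So X) Y \<odot> ?R))
      \<cdot> asc T a (Qo b) (Qo c)"
    unfolding coKl_comp_def a_def b_def c_def using W X Y Z
    by (simp add: Qm_cmp V_cmp_extend_21[OF idt_tenm_cmp[symmetric]] idt_tenm_cmp[symmetric]
        psi_coKl_comp)
  also have "\<dots> = homm (dS W) (iA Z) \<cdot> homm (dS (So W)) (iA Z) \<cdot> M (So (So (So W))) (So Y) Z
      \<cdot> (iV a \<odot> M (So (So (So W))) (So (So X)) (So Y)) \<cdot> (iV a \<odot> (psi (So X) Y \<odot> ?R))
      \<cdot> asc T a (Qo b) (Qo c)"
  proof -
    have M_nat: "M (So (So W)) (So Y) Z \<cdot> (iV a \<odot> homm (Sm (dS W)) (iA (So Y)))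
        = homm (Sm (dS W)) (iA Z) \<cdot> M (So (So (So W))) (So Y) Z"
      using M_nat_left[of "Sm (dS W)" "So (So W)" "So (So (So W))" "So Y" Z] W Y Z
      unfolding a_def by simp
    have coassoc: "homm (dS W) (iA Z) \<cdot> homm (Sm (dS W)) (iA Z) = homm (dS W) (iA Z) \<cdot> homm (dS (So W)) (iA Z)"
      using W Z by (simp add: homm_cmp_left[symmetric] comonad_coassoc[OF comonad_S])
    show ?thesis using W X Y Z unfolding a_def b_def c_def
      by (simp add: V_cmp_extend[OF M_nat[unfolded a_def]] V_cmp_extend[OF coassoc])
  qed
  also have "\<dots> = homm (dS W) (iA Z) \<cdot> homm (dS (So W)) (iA Z) \<cdot> M (So (So (So W))) (So (So X)) Z
      \<cdot> (M (So (So X)) (So Y) Z \<odot> iV (hom (So (So (So W))) (So (So X))))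
      \<cdot> ((iV a \<odot> psi (So X) Y) \<odot> ?R)"
  proof -
    have asc_nat': "(iV a \<odot> (psi (So X) Y \<odot> ?R)) \<cdot> asc T a (Qo b) (Qo c)
        = asc T a (hom (So (So X)) (So Y)) (hom (So (So (So W))) (So (So X)))
          \<cdot> ((iV a \<odot> psi (So X) Y) \<odot> ?R)"
      using asc_nat[of "iV a" "psi (So X) Y" ?R a "Qo b" "Qo c"] W X Y Z
      unfolding a_def b_def c_def by simp
    show ?thesis using W X Y Z unfolding a_def b_def c_def
      by (simp add: asc_nat'[unfolded a_def b_def c_def]
          V_cmp_extend_32[OF M_assoc[of "So (So (So W))" "So (So X)" "So Y" Z]])
  qed
  finally show ?thesis .
qed

lemma coKl_assoc_right_reduct:
  assumes W: "W \<in> Obj A" and X: "X \<in> Obj A" and Y: "Y \<in> Obj A" and Z: "Z \<in> Obj A"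
  defines "a \<equiv> hom (So Y) Z" and "c \<equiv> hom (So W) X"
  shows "coKl_comp W X Z \<cdot> (coKl_comp X Y Z \<odot> Qm (iV c))
    = homm (dS W) (iA Z) \<cdot> homm (dS (So W)) (iA Z) \<cdot> M (So (So (So W))) (So (So X)) Z
      \<cdot> (M (So (So X)) (So Y) Z \<odot> iV (hom (So (So (So W))) (So (So X))))
      \<cdot> ((iV a \<odot> psi (So X) Y) \<odot> (psi (So (So W)) (So X) \<cdot> Qm (psi (So W) X) \<cdot> dQ c))"
proof -
  let ?N = "M (So (So X)) (So Y) Z \<cdot> (iV a \<odot> psi (So X) Y)"
  have "homm (dS W) (iA Z) \<cdot> homm (dS (So W)) (iA Z) \<cdot> M (So (So (So W))) (So (So X)) Z
      \<cdot> (M (So (So X)) (So Y) Z \<odot> iV (hom (So (So (So W))) (So (So X))))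
      \<cdot> ((iV a \<odot> psi (So X) Y) \<odot> (psi (So (So W)) (So X) \<cdot> Qm (psi (So W) X) \<cdot> dQ c))
    = homm (dS W) (iA Z) \<cdot> M (So (So W)) (So (So X)) Z
      \<cdot> (iV (hom (So (So X)) Z) \<odot> homm (dS (So W)) (iA (So (So X))))
      \<cdot> (M (So (So X)) (So Y) Z \<odot> iV (hom (So (So (So W))) (So (So X))))
      \<cdot> ((iV a \<odot> psi (So X) Y) \<odot> (psi (So (So W)) (So X) \<cdot> Qm (psi (So W) X) \<cdot> dQ c))"
  proof -
    have M_nat: "homm (dS (So W)) (iA Z) \<cdot> M (So (So (So W))) (So (So X)) Z
        = M (So (So W)) (So (So X)) Z \<cdot> (iV (hom (So (So X)) Z) \<odot> homm (dS (So W)) (iA (So (So X))))"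
      using M_nat_left[of "dS (So W)" "So (So W)" "So (So (So W))" "So (So X)" Z] W X Z by simp
    show ?thesis using W X Y Z unfolding a_def c_def by (simp add: V_cmp_extend[OF M_nat])
  qed
  also have "\<dots> = homm (dS W) (iA Z) \<cdot> M (So (So W)) (So (So X)) Z
      \<cdot> (?N \<odot> (homm (iA (So (So W))) (dS X) \<cdot> psi (So W) X))"
    using W X Y Z unfolding a_def c_def by (simp add: tenm_cmp[symmetric] psi_delta)
  also have "\<dots> = homm (dS W) (iA Z) \<cdot> M (So (So W)) (So (So X)) Z
      \<cdot> (iV (hom (So (So X)) Z) \<odot> homm (iA (So (So W))) (dS X)) \<cdot> (?N \<odot> psi (So W) X)"
    using W X Y Z unfolding a_def by (simp add: tenm_cmp[symmetric])
  also have "\<dots> = homm (dS W) (iA Z) \<cdot> M (So (So W)) (So X) Z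
      \<cdot> (homm (dS X) (iA Z) \<odot> iV (hom (So (So W)) (So X))) \<cdot> (?N \<odot> psi (So W) X)"
  proof -
    have M_nat: "M (So (So W)) (So (So X)) Z \<cdot> (iV (hom (So (So X)) Z) \<odot> homm (iA (So (So W))) (dS X))
        = M (So (So W)) (So X) Z \<cdot> (homm (dS X) (iA Z) \<odot> iV (hom (So (So W)) (So X)))"
      using M_extranat[of "dS X" "So X" "So (So X)" "So (So W)" Z] W X Z by simp
    show ?thesis using W X Y Z unfolding a_def by (simp add: V_cmp_extend[OF M_nat])
  qed
  also have "\<dots> = coKl_comp W X Z \<cdot> (coKl_comp X Y Z \<odot> Qm (iV c))"
    unfolding coKl_comp_def a_def c_def using W X Y Z by (simp add: tenm_cmp[symmetric])
  finally show ?thesis by (rule sym)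
qed

lemma coKl_comp_assoc:
  assumes "W \<in> Obj A" "X \<in> Obj A" "Y \<in> Obj A" "Z \<in> Obj A"
  shows "coKl_comp W Y Z \<cdot> (iV (hom (So Y) Z) \<odot> Qm (coKl_comp W X Y))
      \<cdot> (iV (hom (So Y) Z) \<odot> phi (hom (So X) Y) (Qo (hom (So W) X)))
      \<cdot> (iV (hom (So Y) Z) \<odot> (iV (Qo (hom (So X) Y)) \<odot> dQ (hom (So W) X)))
      \<cdot> asc T (hom (So Y) Z) (Qo (hom (So X) Y)) (Qo (hom (So W) X))
    = coKl_comp W X Z \<cdot> (coKl_comp X Y Z \<odot> Qm (iV (hom (So W) X)))"
  using coKl_assoc_left_reduct[OF assms] coKl_assoc_right_reduct[OF assms] by simp

theorem coKleisli_skew_enriched: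
  "skew_enriched V (VQ V T Qo Qm phi phi0 dQ eQ) A (\<lambda>X Y. hom (So X) Y) (\<lambda>f g. homm (Sm f) g)
     coKl_comp coKl_unit"
  unfolding skew_enriched_def VQ_def skew.simps
  by (intro conjI ballI category_A coKl_hom_functor coKl_comp_nat_left coKl_comp_nat_right
      coKl_comp_extranat coKl_unit_extranat coKl_comp_assoc coKl_left_unit coKl_right_unit;
      simp add: hom_in_def)

end

theorem mainTheorem4:
  fixes V :: "('v,'f) cat" and T :: "('v,'f) skew" and A :: "('a,'g) cat"
  assumes "skew_monoidal V T"
    and "skew_enriched V T A hom homm M j"
    and "locally_weak_comonad V T A hom homm M j Qo Qm phi phi0 dQ eQ So Sm dS eS psi"
  shows "skew_enriched V (VQ V T Qo Qm phi phi0 dQ eQ) A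
           (\<lambda>X Y. hom (So X) Y)
           (\<lambda>f g. homm (Sm f) g)
           (\<lambda>X Y Z. Cmp V (homm (dS X) (Idt A Z))
                      (Cmp V (M (So (So X)) (So Y) Z)
                         (tenm T (Idt V (hom (So Y) Z)) (psi (So X) Y))))
           (\<lambda>X. Cmp V (homm (eS X) (Idt A X)) (j X))"
proof -
  interpret locally_weak_V_comonad V T A hom homm M j Qo Qm phi phi0 dQ eQ So Sm dS eS psi
    using assms by (intro locally_weak_V_comonad.intro skew_enriched_category.intro
        skew_monoidal_category.intro locally_weak_V_comonad_axioms.intro
        skew_enriched_category_axioms.intro)
  show ?thesis
    using coKleisli_skew_enriched unfolding coKl_comp_def[abs_def] coKl_unit_def[abs_def] .
qed

end
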